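(* For every target rate $r>0$, $P_{\rm r}>0$ and $\mathcal C_x\in[0,1)$, \[ \mathcal P_{\rm E-E}(P_{\rm r},\mathcal C_x)\ge 1-\frac{e^{-\Psi_r(\mathcal C_x)\left(\frac1{P_{\rm s}\theta_{\rm sr}}+\frac1{P_{\rm r}\theta_{\rm rd}(1-\mathcal C_x^2)}\right)}}{\Gamma(m_{\rm sd})\Gamma(m_{\rm rr})\theta_{\rm sd}^{m_{\rm sd}}\theta_{\rm rr}^{m_{\rm rr}}}\sum_{m=0}^{m_{\rm sr}-1}\sum_{m'=0}^{m_{\rm rd}-1}\sum_{k=0}^m\sum_{k'=0}^{m'}\binom mk\binom{m'}{k'} \frac{\dfrac{P_{\rm r}^{k-m'}\Gamma(k+m_{\rm rr})\Gamma(k'+m_{\rm sd})\Psi_r(\mathcal C_x)^{m+m'}}{P_{\rm s}^{m-k'}\Gamma(m+1)\Gamma(m'+1)\theta_{\rm sr}^m\theta_{\rm rd}^{m'}(1-\mathcal C_x^2)^{m'}}}{\left(\frac{P_{\rm r}\Psi_r(\mathcal C_x)}{P_{\rm s}\theta_{\rm sr}}+\frac1{\theta_{\rm rr}}\right)^{k+m_{\rm rr}}\left(\frac{P_{\rm s}\Psi_r(\mathcal C_x)}{P_{\rm r}\theta_{\rm rd}(1-\mathcal C_x^2)}+\frac1{\theta_{\rm sd}}\right)^{k'+m_{\rm sd}}}=:\mathcal P^{\rm LB}_{\rm E-E}(P_{\rm r},\mathcal C_x). \]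
   Context: Let $P_{\rm s}>0$, $P_{\rm r}>0$ be the source and relay transmit powers. For links $ij\in\{\mathrm{sr},\mathrm{rr},\mathrm{rd},\mathrm{sd}\}$ let $g_{ij}$ be mutually independent random channel gains, $g_{ij}$ gamma distributed with integer shape parameter $m_{ij}\ge1$ and scale $\theta_{ij}=\pi_{ij}/m_{ij}$, where $\pi_{ij}=\mathbb E[g_{ij}]>0$; i.e. $g_{ij}$ has density $x^{m_{ij}-1}e^{-x/\theta_{ij}}/(\Gamma(m_{ij})\theta_{ij}^{m_{ij}})$ for $x\ge0$. For a circularity coefficient $\mathcal C_x\in[0,1)$ define $R_{\rm sr}(P_{\rm r},\mathcal C_x)=\tfrac12\log_2\frac{(P_{\rm s}g_{\rm sr}+P_{\rm r}g_{\rm rr}+1)^2-(P_{\rm r}g_{\rm rr}\mathcal C_x)^2}{(P_{\rm r}g_{\rm rr}+1)^2-(P_{\rm r}g_{\rm rr}\mathcal C_x)^2}$ and $R_{\rm rd}(P_{\rm r},\mathcal C_x)=\tfrac12\log_2\frac{(P_{\rm r}g_{\rm rd}+P_{\rm s}g_{\rm sd}+1)^2-(P_{\rm r}g_{\rm rd}\mathcal C_x)^2}{(P_{\rm s}g_{\rm sd}+1)^2}$. For a target rate $r>0$ put $\gamma=2^{2r}-1$, $\eta=2^r-1$ and $\Psi_r(x)=\sqrt{1+\gamma(1-x^2)}-1$. The outage probabilities are $\mathcal P_{\rm sr}=\mathbb P\{R_{\rm sr}<r\}$, $\mathcal P_{\rm rd}=\mathbb P\{R_{\rm rd}<r\}$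 and $\mathcal P_{\rm E-E}=\mathbb P\{\min(R_{\rm sr},R_{\rm rd})<r\}$. *)

theory Defs
  imports "HOL-Probability.Probability"
begin

datatype link = SR | RR | RD | SD

definition gamma_density :: "nat \<Rightarrow> real \<Rightarrow> real \<Rightarrow> real" where
  "gamma_density m \<theta> x =
     (if x \<ge> 0 then x ^ (m - 1) * exp (- x / \<theta>) / (Gamma (real m) * \<theta> ^ m) else 0)"

definition R_sr :: "real \<Rightarrow> real \<Rightarrow> real \<Rightarrow> real \<Rightarrow> real \<Rightarrow> real" where
  "R_sr Ps Pr C gsr grr =
     (1/2) * log 2 (((Ps * gsr + Pr * grr + 1)\<^sup>2 - (Pr * grr * C)\<^sup>2) /
                    ((Pr * grr + 1)\<^sup>2 - (Pr * grr * C)\<^sup>2))"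

definition R_rd :: "real \<Rightarrow> real \<Rightarrow> real \<Rightarrow> real \<Rightarrow> real \<Rightarrow> real" where
  "R_rd Ps Pr C grd gsd =
     (1/2) * log 2 (((Pr * grd + Ps * gsd + 1)\<^sup>2 - (Pr * grd * C)\<^sup>2) / (Ps * gsd + 1)\<^sup>2)"

definition gam :: "real \<Rightarrow> real" where
  "gam r = 2 powr (2 * r) - 1"

definition Psi :: "real \<Rightarrow> real \<Rightarrow> real" where
  "Psi r x = sqrt (1 + gam r * (1 - x\<^sup>2)) - 1"

definition P_LB :: "real \<Rightarrow> real \<Rightarrow> (link \<Rightarrow> nat) \<Rightarrow> (link \<Rightarrow> real) \<Rightarrow> real \<Rightarrow> real \<Rightarrow> real" where
  "P_LB r Ps m \<theta> Pr C =
    (let \<Psi> = Psi r C; D = 1 - C\<^sup>2 in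
     1 - exp (- \<Psi> * (1 / (Ps * \<theta> SR) + 1 / (Pr * \<theta> RD * D))) /
         (Gamma (real (m SD)) * Gamma (real (m RR)) * \<theta> SD ^ m SD * \<theta> RR ^ m RR) *
       (\<Sum>i<m SR. \<Sum>j<m RD. \<Sum>k\<le>i. \<Sum>k'\<le>j.
          real (i choose k) * real (j choose k') *
          ((Pr powr (real k - real j) * Gamma (real k + real (m RR)) *
              Gamma (real k' + real (m SD)) * \<Psi> ^ (i + j)) /
           (Ps powr (real i - real k') * Gamma (real i + 1) * Gamma (real j + 1) *
              \<theta> SR ^ i * \<theta> RD ^ j * D ^ j)) /
          ((Pr * \<Psi> / (Ps * \<theta> SR) + 1 / \<theta> RR) ^ (k + m RR) *
           (Ps * \<Psi> / (Pr * \<theta> RD * D) + 1 / \<theta> SD) ^ (k' + m SD))))"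

end

theory Submission
  imports Defs
begin

text \<open>If the end-to-end link is not in outage, both rate conditions hold. Each can be solved for
  the desired-signal gain, giving thresholds affine in the interference gain:
  \<open>g\<^sub>s\<^sub>r \<ge> \<Psi> (1 + P\<^sub>r g\<^sub>r\<^sub>r) / P\<^sub>s\<close> and \<open>g\<^sub>r\<^sub>d \<ge> \<Psi> (1 + P\<^sub>s g\<^sub>s\<^sub>d) / (P\<^sub>r (1 - C\<^sup>2))\<close>.
  The two events involve disjoint pairs of independent gamma (Erlang) gains, so the probability of
  non-outage is at most the product of two probabilities of the form
  \<open>P{X \<ge> c (1 + d Y)}\<close>, and these are computed in closed form; their product is exactly
  \<open>1 - P_LB\<close>.\<close>

lemma gam_nonneg: "0 \<le> r \<Longrightarrow> 0 \<le> gam r"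
  unfolding gam_def using ge_one_powr_ge_zero[of 2 "2*r"] by simp

lemma le_half_log2_iff:
  assumes "0 < x" shows "r \<le> 1/2 * log 2 x \<longleftrightarrow> 1 + gam r \<le> x"
proof -
  have "r \<le> 1/2 * log 2 x \<longleftrightarrow> 2 * r \<le> log 2 x" by linarith
  also have "\<dots> \<longleftrightarrow> 2 powr (2 * r) \<le> x" using assms by (simp add: le_log_iff)
  finally show ?thesis by (simp add: gam_def)
qed

lemma sqrt_mult_le_of_sq_le:
  fixes q u v :: real
  assumes "0 \<le> q" "0 \<le> u" "0 \<le> v" "q * u\<^sup>2 \<le> v\<^sup>2"
  shows "sqrt q * u \<le> v"
proof (rule power2_le_imp_le)
  show "(sqrt q * u)\<^sup>2 \<le> v\<^sup>2" using assms by (simp add: power_mult_distrib)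
qed (use assms in simp)

lemma R_sr_ge_imp_threshold:
  assumes Ps: "0 < Ps" and Pr: "0 < Pr" and "0 \<le> gsr" "0 \<le> grr" and C: "C\<^sup>2 \<le> 1"
    and r: "0 \<le> r" and rate: "r \<le> R_sr Ps Pr C gsr grr"
  shows "Psi r C / Ps * (1 + Pr * grr) \<le> gsr"
proof -
  define a where "a = Pr * grr"
  define s where "s = Ps * gsr"
  define \<gamma> where "\<gamma> = gam r"
  have a: "0 \<le> a" and s: "0 \<le> s" and \<gamma>: "0 \<le> \<gamma>"
    using assms gam_nonneg by (simp_all add: a_def s_def \<gamma>_def)
  have aC: "(a * C)\<^sup>2 \<le> a\<^sup>2" using C a by (simp add: power_mult_distrib mult_left_le)
  have "a\<^sup>2 < (a + 1)\<^sup>2" using a by (intro power_strict_mono) simp_all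
  with aC have den: "0 < (a + 1)\<^sup>2 - (a * C)\<^sup>2" by linarith
  have num: "(a + 1)\<^sup>2 - (a * C)\<^sup>2 \<le> (s + a + 1)\<^sup>2 - (a * C)\<^sup>2"
    using a s by (simp add: power_mono)
  have "r \<le> 1/2 * log 2 (((s + a + 1)\<^sup>2 - (a * C)\<^sup>2) / ((a + 1)\<^sup>2 - (a * C)\<^sup>2))"
    using rate unfolding R_sr_def a_def s_def .
  then have "1 + \<gamma> \<le> ((s + a + 1)\<^sup>2 - (a * C)\<^sup>2) / ((a + 1)\<^sup>2 - (a * C)\<^sup>2)"
    unfolding \<gamma>_def using den num by (subst (asm) le_half_log2_iff) simp_all
  then have "(1 + \<gamma>) * ((a + 1)\<^sup>2 - (a * C)\<^sup>2) \<le> (s + a + 1)\<^sup>2 - (a * C)\<^sup>2"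
    using den by (simp add: pos_le_divide_eq)
  \<comment> \<open>The only lossy step of the whole bound: \<open>(a C)\<^sup>2\<close> is enlarged to \<open>((a + 1) C)\<^sup>2\<close>.
    The relay-destination condition below is inverted exactly.\<close>
  moreover have "\<gamma> * (a * C)\<^sup>2 \<le> \<gamma> * ((a + 1)\<^sup>2 * C\<^sup>2)"
    using \<gamma> a by (intro mult_left_mono) (simp_all add: power_mult_distrib mult_right_mono power_mono)
  ultimately have "(1 + \<gamma> * (1 - C\<^sup>2)) * (a + 1)\<^sup>2 \<le> (s + a + 1)\<^sup>2"
    by (simp add: algebra_simps)
  then have "sqrt (1 + \<gamma> * (1 - C\<^sup>2)) * (a + 1) \<le> s + a + 1"
    using a s \<gamma> C by (intro sqrt_mult_le_of_sq_le) simp_all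
  then have "Psi r C * (1 + Pr * grr) \<le> Ps * gsr"
    by (simp add: Psi_def \<gamma>_def a_def s_def algebra_simps)
  then show ?thesis using Ps by (simp add: pos_divide_le_eq mult.commute)
qed

lemma R_rd_ge_imp_threshold:
  assumes Ps: "0 < Ps" and Pr: "0 < Pr" and "0 \<le> grd" "0 \<le> gsd" and C: "C\<^sup>2 < 1"
    and r: "0 \<le> r" and rate: "r \<le> R_rd Ps Pr C grd gsd"
  shows "Psi r C / (Pr * (1 - C\<^sup>2)) * (1 + Ps * gsd) \<le> grd"
proof -
  define b where "b = Pr * grd"
  define u where "u = Ps * gsd + 1"
  define D where "D = 1 - C\<^sup>2"
  define \<gamma> where "\<gamma> = gam r"
  have b: "0 \<le> b" and u: "1 \<le> u" and D: "0 < D" and \<gamma>: "0 \<le> \<gamma>"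
    using assms gam_nonneg by (simp_all add: b_def u_def D_def \<gamma>_def)
  have "(b * C)\<^sup>2 \<le> b\<^sup>2" using C b by (simp add: power_mult_distrib mult_left_le)
  moreover have "b\<^sup>2 < (b + u)\<^sup>2" using b u by (intro power_strict_mono) simp_all
  ultimately have num: "0 < (b + u)\<^sup>2 - (b * C)\<^sup>2" by linarith
  have "r \<le> 1/2 * log 2 (((b + u)\<^sup>2 - (b * C)\<^sup>2) / u\<^sup>2)"
    using rate unfolding R_rd_def b_def u_def by (simp add: add.assoc)
  then have "1 + \<gamma> \<le> ((b + u)\<^sup>2 - (b * C)\<^sup>2) / u\<^sup>2"
    unfolding \<gamma>_def using num u by (subst (asm) le_half_log2_iff) simp_all
  then have "(1 + \<gamma>) * u\<^sup>2 \<le> (b + u)\<^sup>2 - (b * C)\<^sup>2"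
    using u by (simp add: pos_le_divide_eq)
  then have "\<gamma> * u\<^sup>2 \<le> D * b\<^sup>2 + 2 * b * u"
    by (simp add: D_def power2_eq_square algebra_simps)
  then have "D * (\<gamma> * u\<^sup>2) \<le> D * (D * b\<^sup>2 + 2 * b * u)"
    by (rule mult_left_mono) (use D in simp)
  then have "(1 + \<gamma> * D) * u\<^sup>2 \<le> (b * D + u)\<^sup>2"
    by (simp add: power2_eq_square algebra_simps)
  then have "sqrt (1 + \<gamma> * D) * u \<le> b * D + u"
    using b u D \<gamma> by (intro sqrt_mult_le_of_sq_le) simp_all
  then have "Psi r C * (1 + Ps * gsd) \<le> Pr * (1 - C\<^sup>2) * grd"
    by (simp add: Psi_def \<gamma>_def D_def b_def u_def algebra_simps)
  then show ?thesis using Pr D by (simp add: D_def pos_divide_le_eq mult_ac)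
qed

lemma no_outage_imp_thresholds:
  assumes Ps: "0 < Ps" and Pr: "0 < Pr" and "0 \<le> gsr" "0 \<le> grr" "0 \<le> grd" "0 \<le> gsd"
    and C: "C\<^sup>2 < 1" and r: "0 \<le> r"
    and "\<not> min (R_sr Ps Pr C gsr grr) (R_rd Ps Pr C grd gsd) < r"
  shows "Psi r C / Ps * (1 + Pr * grr) \<le> gsr \<and> Psi r C / (Pr * (1 - C\<^sup>2)) * (1 + Ps * gsd) \<le> grd"
proof -
  have sr: "r \<le> R_sr Ps Pr C gsr grr" and rd: "r \<le> R_rd Ps Pr C grd gsd"
    using assms(9) by auto
  show ?thesis
    by (intro conjI R_sr_ge_imp_threshold[OF Ps Pr assms(3,4) _ r sr]
        R_rd_ge_imp_threshold[OF Ps Pr assms(5,6) C r rd]) (use C in simp)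
qed

lemma gam_pos: "0 < r \<Longrightarrow> 0 < gam r"
  unfolding gam_def using gr_one_powr[of 2 "2 * r"] by simp

lemma Psi_pos:
  assumes "0 < r" "C\<^sup>2 < 1"
  shows "0 < Psi r C"
proof -
  have "0 < gam r * (1 - C\<^sup>2)" using assms gam_pos by simp
  then show ?thesis unfolding Psi_def by simp
qed

lemma gamma_density_eq_erlang_density:
  assumes "1 \<le> m" "0 < \<theta>"
  shows "gamma_density m \<theta> = erlang_density (m - 1) (1 / \<theta>)"
proof
  fix x
  obtain k where k: "m = Suc k" using assms(1) by (cases m) auto
  have "Gamma (real m) = fact k"
    using Gamma_fact[of k, where 'a=real] by (simp add: k add.commute)
  then show "gamma_density m \<theta> x = erlang_density (m - 1) (1 / \<theta>) x"
    using assms(2) unfolding gamma_density_def erlang_density_def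
    by (auto simp: k power_one_over field_simps)
qed

lemma nn_integral_erlang_density_atLeast:
  assumes l: "0 < l"
  shows "(\<integral>\<^sup>+x. ennreal (erlang_density k l x) * indicator {t..} x \<partial>lborel)
    = ennreal (1 - erlang_CDF k l t)"
proof -
  let ?E = "density lborel (erlang_density k l)"
  interpret E: prob_space ?E
    using prob_space_erlang_density[OF l] .
  have "(\<integral>\<^sup>+x. ennreal (erlang_density k l x) * indicator {t..} x \<partial>lborel)
      = (\<integral>\<^sup>+x. ennreal (erlang_density k l x) * indicator {t<..} x \<partial>lborel)"
    by (intro nn_integral_cong_AE, use AE_lborel_singleton[of t] in eventually_elim)
       (auto split: split_indicator)
  also have "\<dots> = emeasure ?E (space ?E - {..t})"
    by (simp add: emeasure_density greaterThan_def Compl_eq_Diff_UNIV[symmetric])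
  also have "\<dots> = 1 - ennreal (erlang_CDF k l t)"
    using E.emeasure_space_1 emeasure_erlang_density[OF l] by (subst emeasure_compl) auto
  also have "\<dots> = ennreal (1 - erlang_CDF k l t)"
    using l by (simp add: ennreal_minus flip: ennreal_1)
  finally show ?thesis .
qed

lemma one_minus_erlang_CDF:
  "0 \<le> t \<Longrightarrow> 1 - erlang_CDF k l t = (\<Sum>n\<le>k. (l * t) ^ n * exp (- l * t) / fact n)"
  by (simp add: erlang_CDF_def)

lemma erlang_density_mult_power_exp:
  assumes l: "0 < l" and b: "0 \<le> b"
  shows "erlang_density k l y * y ^ j * exp (- b * y)
    = l ^ Suc k * fact (k + j) / (fact k * (l + b) ^ Suc (k + j)) * erlang_density (k + j) (l + b) y"
proof (cases "y < 0")
  case False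
  have "exp (- (l + b) * y) = exp (- l * y) * exp (- b * y)"
    by (simp add: exp_add[symmetric] algebra_simps)
  then have e1: "erlang_density (k + j) (l + b) y
      = (l + b) ^ Suc (k + j) * y ^ (k + j) * (exp (- l * y) * exp (- b * y)) / fact (k + j)"
    using False by (simp add: erlang_density_def del: minus_mult_left)
  have e2: "erlang_density k l y = l ^ Suc k * y ^ k * exp (- l * y) / fact k"
    using False by (simp add: erlang_density_def del: minus_mult_left)
  define B where "B = (l + b) ^ Suc (k + j)"
  have "B \<noteq> 0" using l b by (simp add: B_def)
  then show ?thesis
    unfolding e1 e2 B_def[symmetric] by (simp add: power_add field_simps)
qed (simp add: erlang_density_def)

lemma nn_integral_erlang_density_mult_power_exp:
  assumes l: "0 < l" and b: "0 \<le> b"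
  shows "(\<integral>\<^sup>+y. ennreal (erlang_density k l y * y ^ j * exp (- b * y)) \<partial>lborel)
    = ennreal (l ^ Suc k * fact (k + j) / (fact k * (l + b) ^ Suc (k + j)))"
proof -
  define K where "K = l ^ Suc k * fact (k + j) / (fact k * (l + b) ^ Suc (k + j))"
  have K: "0 \<le> K" using l b by (simp add: K_def)
  have "(\<integral>\<^sup>+y. ennreal (erlang_density k l y * y ^ j * exp (- b * y)) \<partial>lborel)
      = (\<integral>\<^sup>+y. ennreal K * ennreal (erlang_density (k + j) (l + b) y) \<partial>lborel)"
    unfolding erlang_density_mult_power_exp[OF l b] K_def[symmetric]
    using K by (simp add: ennreal_mult')
  also have "\<dots> = ennreal K * (\<integral>\<^sup>+y. ennreal (erlang_density (k + j) (l + b) y) \<partial>lborel)"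
    by (rule nn_integral_cmult) simp
  also have "(\<integral>\<^sup>+y. ennreal (erlang_density (k + j) (l + b) y) \<partial>lborel) = 1"
    using nn_integral_erlang_ith_moment[of "l + b" "k + j" 0] l b by simp
  finally show ?thesis by (simp add: K_def)
qed

lemma poisson_weight_affine_expand:
  fixes l c d y :: real
  shows "(l * (c * (1 + d * y))) ^ n * exp (- l * (c * (1 + d * y))) / fact n
    = (\<Sum>j\<le>n. exp (- l * c) * (l * c) ^ n / fact n * real (n choose j) * d ^ j
                 * (y ^ j * exp (- (l * c * d) * y)))"
proof -
  have "(1 + d * y) ^ n = (\<Sum>j\<le>n. real (n choose j) * d ^ j * y ^ j)"
    using binomial_ring[of "d * y" 1 n] by (simp add: add.commute power_mult_distrib mult.assoc)
  moreover have "exp (- l * (c * (1 + d * y))) = exp (- l * c) * exp (- (l * c * d) * y)"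
    by (simp add: exp_add[symmetric] algebra_simps)
  ultimately show ?thesis
    by (simp add: power_mult_distrib sum_distrib_left sum_distrib_right sum_divide_distrib mult_ac)
qed

text \<open>Conditionally on \<open>Y = y\<close>, the Erlang tail \<open>P{X \<ge> c (1 + d y)}\<close> is a Poisson sum
  in \<open>(1 + d y)\<close>; expanding each power binomially leaves exponentially tilted Erlang moments
  of \<open>Y\<close>, which are explicit.\<close>
definition erlang_threshold_prob :: "nat \<Rightarrow> real \<Rightarrow> nat \<Rightarrow> real \<Rightarrow> real \<Rightarrow> real \<Rightarrow> real" where
  "erlang_threshold_prob k1 l1 k2 l2 c d = (\<Sum>n\<le>k1. \<Sum>j\<le>n.
     exp (- l1 * c) * (l1 * c) ^ n / fact n * real (n choose j) * d ^ j *
     (l2 ^ Suc k2 * fact (k2 + j) / (fact k2 * (l2 + l1 * c * d) ^ Suc (k2 + j))))"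

lemma erlang_threshold_prob_nonneg:
  assumes "0 < l1" "0 < l2" "0 \<le> c" "0 \<le> d"
  shows "0 \<le> erlang_threshold_prob k1 l1 k2 l2 c d"
  unfolding erlang_threshold_prob_def using assms
  by (intro sum_nonneg mult_nonneg_nonneg divide_nonneg_nonneg) auto

lemma nn_integral_erlang_density_mult_affine_tail:
  assumes l1: "0 < l1" and l2: "0 < l2" and c: "0 \<le> c" and d: "0 \<le> d"
  shows "(\<integral>\<^sup>+y. ennreal (erlang_density k2 l2 y * (1 - erlang_CDF k1 l1 (c * (1 + d * y)))) \<partial>lborel)
    = ennreal (erlang_threshold_prob k1 l1 k2 l2 c d)"
proof -
  define coef where "coef n j = exp (- l1 * c) * (l1 * c) ^ n / fact n * real (n choose j) * d ^ j" for n j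
  define h where "h j y = erlang_density k2 l2 y * y ^ j * exp (- (l1 * c * d) * y)" for j y
  define K where "K j = l2 ^ Suc k2 * fact (k2 + j) / (fact k2 * (l2 + l1 * c * d) ^ Suc (k2 + j))" for j
  have b: "0 \<le> l1 * c * d" using l1 c d by simp
  have coef: "0 \<le> coef n j" for n j using l1 c d by (simp add: coef_def)
  have K: "0 \<le> K j" for j using l2 b by (simp add: K_def)
  have h: "0 \<le> h j y" for j y
    using l2 by (cases "y < 0") (auto simp: h_def erlang_density_def)
  have "erlang_density k2 l2 y * (1 - erlang_CDF k1 l1 (c * (1 + d * y)))
      = (\<Sum>n\<le>k1. \<Sum>j\<le>n. coef n j * h j y)" for y
  proof (cases "y < 0")
    case False
    then have t: "0 \<le> c * (1 + d * y)" using c d by simp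
    show ?thesis
      unfolding one_minus_erlang_CDF[OF t] poisson_weight_affine_expand coef_def h_def
      by (simp add: sum_distrib_left mult_ac)
  qed (simp add: erlang_density_def h_def)
  then have "(\<integral>\<^sup>+y. ennreal (erlang_density k2 l2 y * (1 - erlang_CDF k1 l1 (c * (1 + d * y)))) \<partial>lborel)
      = (\<Sum>n\<le>k1. \<Sum>j\<le>n. ennreal (coef n j) * (\<integral>\<^sup>+y. ennreal (h j y) \<partial>lborel))"
    using coef h by (simp add: sum_nonneg ennreal_mult nn_integral_sum nn_integral_cmult
        h_def[abs_def] flip: sum_ennreal)
  also have "\<dots> = (\<Sum>n\<le>k1. \<Sum>j\<le>n. ennreal (coef n j) * ennreal (K j))"
    using nn_integral_erlang_density_mult_power_exp[OF l2 b, of k2] by (simp add: h_def K_def)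
  also have "\<dots> = ennreal (erlang_threshold_prob k1 l1 k2 l2 c d)"
    using coef K unfolding erlang_threshold_prob_def coef_def[symmetric] K_def[symmetric]
    by (simp add: ennreal_mult' sum_nonneg flip: sum_ennreal)
  finally show ?thesis .
qed

lemma (in prob_space) emeasure_le_indep_erlang:
  assumes X: "distributed M lborel X (\<lambda>x. ennreal (erlang_density k l x))"
    and Y: "distributed M lborel Y fY"
    and ind: "indep_var lborel X lborel Y"
    and l: "0 < l" and \<phi>[measurable]: "\<phi> \<in> borel_measurable borel"
  shows "emeasure M {\<omega>\<in>space M. \<phi> (Y \<omega>) \<le> X \<omega>}
    = (\<integral>\<^sup>+y. fY y * ennreal (1 - erlang_CDF k l (\<phi> y)) \<partial>lborel)"
proof -
  let ?fX = "\<lambda>x. ennreal (erlang_density k l x)"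
  define S where "S = {p :: real \<times> real. \<phi> (snd p) \<le> fst p}"
  have fY[measurable]: "fY \<in> borel_measurable lborel"
    using distributed_borel_measurable[OF Y] .
  have S[measurable]: "S \<in> sets (lborel \<Otimes>\<^sub>M lborel)"
  proof -
    have "Measurable.pred (lborel \<Otimes>\<^sub>M lborel) (\<lambda>p :: real \<times> real. \<phi> (snd p) \<le> fst p)"
      by measurable
    then show ?thesis unfolding S_def pred_def by (simp add: space_pair_measure)
  qed
  have J: "distributed M (lborel \<Otimes>\<^sub>M lborel) (\<lambda>\<omega>. (X \<omega>, Y \<omega>)) (\<lambda>(x, y). ?fX x * fY y)"
    by (rule distributed_joint_indep[OF _ _ X Y ind])
       (simp_all add: lborel.sigma_finite_measure_axioms)
  have "{\<omega>\<in>space M. \<phi> (Y \<omega>) \<le> X \<omega>} = (\<lambda>\<omega>. (X \<omega>, Y \<omega>)) -` S \<inter> space M"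
    by (auto simp: S_def)
  then have "emeasure M {\<omega>\<in>space M. \<phi> (Y \<omega>) \<le> X \<omega>}
      = (\<integral>\<^sup>+p. (case p of (x, y) \<Rightarrow> ?fX x * fY y) * indicator S p \<partial>(lborel \<Otimes>\<^sub>M lborel))"
    using distributed_emeasure[OF J S] by simp
  also have "\<dots> = (\<integral>\<^sup>+y. \<integral>\<^sup>+x. ?fX x * fY y * indicator S (x, y) \<partial>lborel \<partial>lborel)"
    by (subst lborel_pair.nn_integral_snd[symmetric]) (simp_all add: case_prod_beta')
  also have "\<dots> = (\<integral>\<^sup>+y. fY y * (\<integral>\<^sup>+x. ?fX x * indicator {\<phi> y..} x \<partial>lborel) \<partial>lborel)"
    by (subst nn_integral_cmult[symmetric])
       (auto intro!: nn_integral_cong simp: S_def mult_ac split: split_indicator)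
  also have "\<dots> = (\<integral>\<^sup>+y. fY y * ennreal (1 - erlang_CDF k l (\<phi> y)) \<partial>lborel)"
    by (simp add: nn_integral_erlang_density_atLeast[OF l])
  finally show ?thesis .
qed

lemma (in prob_space) prob_erlang_affine_threshold:
  assumes X: "distributed M lborel X (\<lambda>x. ennreal (erlang_density k1 l1 x))"
    and Y: "distributed M lborel Y (\<lambda>y. ennreal (erlang_density k2 l2 y))"
    and ind: "indep_var lborel X lborel Y"
    and l1: "0 < l1" and l2: "0 < l2" and c: "0 \<le> c" and d: "0 \<le> d"
  shows "prob {\<omega>\<in>space M. c * (1 + d * Y \<omega>) \<le> X \<omega>} = erlang_threshold_prob k1 l1 k2 l2 c d"
proof -
  have "emeasure M {\<omega>\<in>space M. c * (1 + d * Y \<omega>) \<le> X \<omega>}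
      = ennreal (erlang_threshold_prob k1 l1 k2 l2 c d)"
    using emeasure_le_indep_erlang[OF X Y ind l1, of "\<lambda>y. c * (1 + d * y)"]
      nn_integral_erlang_density_mult_affine_tail[OF l1 l2 c d, of k2 k1] l2
    by (simp add: ennreal_mult')
  then show ?thesis
    using erlang_threshold_prob_nonneg[OF l1 l2 c d] by (simp add: emeasure_eq_measure)
qed

lemma (in prob_space) indep_var_restrict_compose:
  assumes "indep_vars (\<lambda>_. borel) X I" "A \<inter> B = {}" "A \<subseteq> I" "B \<subseteq> I"
    and "f \<in> measurable (PiM A (\<lambda>_. borel)) N" "h \<in> measurable (PiM B (\<lambda>_. borel)) N'"
  shows "indep_var N (\<lambda>\<omega>. f (\<lambda>i\<in>A. X i \<omega>)) N' (\<lambda>\<omega>. h (\<lambda>i\<in>B. X i \<omega>))"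
  using indep_var_compose[OF indep_var_restrict[OF assms(1-4)] assms(5,6)] by (simp add: comp_def)

lemma (in prob_space) prob_two_erlang_affine_thresholds:
  fixes X :: "'i \<Rightarrow> 'a \<Rightarrow> real"
  assumes ind: "indep_vars (\<lambda>_. borel) X UNIV" and distinct: "distinct [a, b, a', b']"
    and X: "\<And>i. distributed M lborel (X i) (\<lambda>x. ennreal (erlang_density (k i) (l i) x))"
    and l: "\<And>i. 0 < l i" and "0 \<le> c" "0 \<le> d" "0 \<le> c'" "0 \<le> d'"
  shows "prob {\<omega>\<in>space M. c * (1 + d * X b \<omega>) \<le> X a \<omega> \<and> c' * (1 + d' * X b' \<omega>) \<le> X a' \<omega>}
    = erlang_threshold_prob (k a) (l a) (k b) (l b) c d * erlang_threshold_prob (k a') (l a') (k b') (l b') c' d'"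
proof -
  have single: "(\<lambda>f. f i) \<in> measurable (PiM {i} (\<lambda>_. borel)) lborel" for i
    unfolding measurable_lborel1 by (rule measurable_component_singleton) simp
  have pair: "(\<lambda>f. (f i, f j)) \<in> measurable (PiM {i, j} (\<lambda>_. borel)) (lborel \<Otimes>\<^sub>M lborel)" for i j
    by (intro measurable_Pair; unfold measurable_lborel1; rule measurable_component_singleton) simp_all
  have "indep_var lborel (X i) lborel (X j)" if "i \<noteq> j" for i j
    using indep_var_restrict_compose[OF ind _ _ _ single[of i] single[of j]] that by simp
  then have probs: "prob {\<omega>\<in>space M. c * (1 + d * X b \<omega>) \<le> X a \<omega>} = erlang_threshold_prob (k a) (l a) (k b) (l b) c d"
    "prob {\<omega>\<in>space M. c' * (1 + d' * X b' \<omega>) \<le> X a' \<omega>} = erlang_threshold_prob (k a') (l a') (k b') (l b') c' d'"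
    using distinct assms(5-8) by (auto intro!: prob_erlang_affine_threshold X l)
  have "indep_var (lborel \<Otimes>\<^sub>M lborel) (\<lambda>\<omega>. (X a \<omega>, X b \<omega>)) (lborel \<Otimes>\<^sub>M lborel) (\<lambda>\<omega>. (X a' \<omega>, X b' \<omega>))"
    using indep_var_restrict_compose[OF ind _ _ _ pair[of a b] pair[of a' b']] distinct by auto
  moreover have "{p :: real \<times> real. e * (1 + f * snd p) \<le> fst p} \<in> sets (lborel \<Otimes>\<^sub>M lborel)" for e f
  proof -
    have "Measurable.pred (lborel \<Otimes>\<^sub>M lborel) (\<lambda>p :: real \<times> real. e * (1 + f * snd p) \<le> fst p)"
      by measurable
    then show ?thesis unfolding pred_def by (simp add: space_pair_measure)
  qed
  ultimately show ?thesis
    using indep_varD[of _ "\<lambda>\<omega>. (X a \<omega>, X b \<omega>)" _ "\<lambda>\<omega>. (X a' \<omega>, X b' \<omega>)"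
        "{p. c * (1 + d * snd p) \<le> fst p}" "{p. c' * (1 + d' * snd p) \<le> fst p}"] probs
    by (simp add: Int_def conj_commute vimage_def)
qed

lemma (in prob_space) gamma_distributed_nonneg:
  assumes "distributed M lborel X (\<lambda>x. ennreal (gamma_density m \<theta> x))"
  shows "AE \<omega> in M. 0 \<le> X \<omega>"
  using distributed_AE2[OF assms, of "\<lambda>x. 0 \<le> x"] by (auto simp: gamma_density_def intro!: AE_I2)

lemma (in prob_space) prob_ge_one_minus_prob_AE:
  assumes "A \<in> events" "B \<in> events" "AE \<omega> in M. \<omega> \<in> space M - A \<longrightarrow> \<omega> \<in> B"
  shows "1 - prob B \<le> prob A"
  using finite_measure_mono_AE[OF assms(3,2)] prob_compl[OF assms(1)] by simp

lemma P_LB_summand_eq: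
  fixes \<Psi> Ps Pr D ts tr td tq :: real
  assumes pos: "0 < \<Psi>" "0 < Ps" "0 < Pr" "0 < D" "0 < ts" "0 < tr" "0 < td" "0 < tq"
  shows "exp (- \<Psi> * (1 / (Ps * ts) + 1 / (Pr * td * D))) /
     (Gamma (real (Suc b)) * Gamma (real (Suc a)) * tq ^ Suc b * tr ^ Suc a) *
   (real (i choose k) * real (j choose k') *
          ((Pr powr (real k - real j) * Gamma (real k + real (Suc a)) *
              Gamma (real k' + real (Suc b)) * \<Psi> ^ (i + j)) /
           (Ps powr (real i - real k') * Gamma (real i + 1) * Gamma (real j + 1) *
              ts ^ i * td ^ j * D ^ j)) /
          ((Pr * \<Psi> / (Ps * ts) + 1 / tr) ^ (k + Suc a) *
           (Ps * \<Psi> / (Pr * td * D) + 1 / tq) ^ (k' + Suc b)))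
 = (exp (- (1 / ts) * (\<Psi> / Ps)) * ((1 / ts) * (\<Psi> / Ps)) ^ i / fact i * real (i choose k) * Pr ^ k *
     ((1 / tr) ^ Suc a * fact (a + k) / (fact a * ((1 / tr) + (1 / ts) * (\<Psi> / Ps) * Pr) ^ Suc (a + k)))) *
   (exp (- (1 / td) * (\<Psi> / (Pr * D))) * ((1 / td) * (\<Psi> / (Pr * D))) ^ j / fact j * real (j choose k') * Ps ^ k' *
     ((1 / tq) ^ Suc b * fact (b + k') / (fact b * ((1 / tq) + (1 / td) * (\<Psi> / (Pr * D)) * Ps) ^ Suc (b + k'))))"
proof -
  define B1 where "B1 = 1 / tr + (1 / ts) * (\<Psi> / Ps) * Pr"
  define B2 where "B2 = 1 / tq + (1 / td) * (\<Psi> / (Pr * D)) * Ps"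
  define E1 where "E1 = exp (- (1 / ts) * (\<Psi> / Ps))"
  define E2 where "E2 = exp (- (1 / td) * (\<Psi> / (Pr * D)))"
  have B1: "Pr * \<Psi> / (Ps * ts) + 1 / tr = B1" and B2: "Ps * \<Psi> / (Pr * td * D) + 1 / tq = B2"
    unfolding B1_def B2_def using pos by (simp_all add: field_simps)
  have "0 < B1" "0 < B2" "0 < E1" "0 < E2"
    unfolding B1_def B2_def E1_def E2_def using pos by (simp_all add: add_pos_pos)
  moreover have E: "exp (- \<Psi> * (1 / (Ps * ts) + 1 / (Pr * td * D))) = E1 * E2"
    unfolding E1_def E2_def by (simp add: exp_add[symmetric] field_simps)
  moreover have "Pr powr (real k - real j) = Pr ^ k / Pr ^ j" "Ps powr (real i - real k') = Ps ^ i / Ps ^ k'"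
    using pos by (simp_all add: powr_diff powr_realpow)
  moreover have "Gamma (real (Suc n)) = fact n" "Gamma (real n + 1) = fact n"
    "Gamma (real n + real (Suc n')) = fact (n' + n)" for n n'
    using Gamma_fact[of n, where 'a=real] Gamma_fact[of "n + n'", where 'a=real]
    by (simp_all add: add_ac)
  ultimately show ?thesis
    unfolding B1 B2 B1_def[symmetric] B2_def[symmetric] E1_def[symmetric] E2_def[symmetric]
    using pos by (simp add: field_simps power_divide power_mult_distrib power_add add.commute)
qed

lemma P_LB_eq_erlang_threshold_probs:
  assumes m: "\<And>ij. 1 \<le> m ij" and \<theta>: "\<And>ij. 0 < \<theta> ij"
    and Ps: "0 < Ps" and Pr: "0 < Pr" and r: "0 < r" and C: "C\<^sup>2 < 1"
  shows "P_LB r Ps m \<theta> Pr C = 1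
    - erlang_threshold_prob (m SR - 1) (1 / \<theta> SR) (m RR - 1) (1 / \<theta> RR) (Psi r C / Ps) Pr
    * erlang_threshold_prob (m RD - 1) (1 / \<theta> RD) (m SD - 1) (1 / \<theta> SD) (Psi r C / (Pr * (1 - C\<^sup>2))) Ps"
proof -
  define k where "k ij = m ij - 1" for ij
  have mk: "m ij = Suc (k ij)" for ij using m[of ij] by (simp add: k_def)
  show ?thesis
    unfolding P_LB_def Let_def mk diff_Suc_1 erlang_threshold_prob_def sum_product
    unfolding lessThan_Suc_atMost sum_distrib_left
    by (intro arg_cong[where f="\<lambda>x. 1 - x"] sum.cong refl P_LB_summand_eq)
       (use Psi_pos[OF r C] Ps Pr C \<theta> in auto)
qed

theorem theorem3:
  fixes M :: "'a measure" and g :: "link \<Rightarrow> 'a \<Rightarrow> real"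
    and m :: "link \<Rightarrow> nat" and \<pi> \<theta> :: "link \<Rightarrow> real"
    and Ps Pr C r :: real
  assumes "prob_space M"
    and "\<And>ij. m ij \<ge> 1"
    and "\<And>ij. \<pi> ij > 0"
    and "\<And>ij. \<theta> ij = \<pi> ij / real (m ij)"
    and "prob_space.indep_vars M (\<lambda>_. borel) g UNIV"
    and "\<And>ij. distributed M lborel (g ij) (\<lambda>x. ennreal (gamma_density (m ij) (\<theta> ij) x))"
    and "Ps > 0" and "Pr > 0" and "r > 0" and "0 \<le> C" and "C < 1"
  shows "measure M {\<omega> \<in> space M.
            min (R_sr Ps Pr C (g SR \<omega>) (g RR \<omega>)) (R_rd Ps Pr C (g RD \<omega>) (g SD \<omega>)) < r}
         \<ge> P_LB r Ps m \<theta> Pr C"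
proof -
  interpret prob_space M by fact
  have \<theta>: "0 < \<theta> ij" for ij using assms(2-4)[of ij] by simp
  have C: "C\<^sup>2 < 1" using assms(10,11) by (simp add: abs_square_less_1)
  have erlang: "distributed M lborel (g ij) (\<lambda>x. ennreal (erlang_density (m ij - 1) (1 / \<theta> ij) x))" for ij
    using assms(6)[of ij] gamma_density_eq_erlang_density[OF assms(2) \<theta>] by simp
  have [measurable]: "g ij \<in> borel_measurable M" for ij
    using distributed_measurable[OF erlang] by (simp add: measurable_lborel1)
  define T where "T = {\<omega> \<in> space M. Psi r C / Ps * (1 + Pr * g RR \<omega>) \<le> g SR \<omega>
    \<and> Psi r C / (Pr * (1 - C\<^sup>2)) * (1 + Ps * g SD \<omega>) \<le> g RD \<omega>}"
  have "P_LB r Ps m \<theta> Pr C = 1 - prob T"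
    unfolding T_def P_LB_eq_erlang_threshold_probs[OF assms(2) \<theta> assms(7-9) C]
    using Psi_pos[OF assms(9) C] assms(7,8) C \<theta>
    by (subst prob_two_erlang_affine_thresholds[OF assms(5) _ erlang]) auto
  also have "1 - prob T \<le> measure M {\<omega> \<in> space M.
      min (R_sr Ps Pr C (g SR \<omega>) (g RR \<omega>)) (R_rd Ps Pr C (g RD \<omega>) (g SD \<omega>)) < r}"
    (is "_ \<le> measure M ?Out")
  proof (rule prob_ge_one_minus_prob_AE)
    have nonneg: "AE \<omega> in M. 0 \<le> g ij \<omega>" for ij
      using gamma_distributed_nonneg[OF assms(6)] .
    show "AE \<omega> in M. \<omega> \<in> space M - ?Out \<longrightarrow> \<omega> \<in> T"
      using nonneg[of SR] nonneg[of RR] nonneg[of RD] nonneg[of SD]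
    proof eventually_elim
      case (elim \<omega>)
      then show ?case
        using no_outage_imp_thresholds[OF assms(7,8) elim C less_imp_le[OF assms(9)]]
        unfolding T_def by blast
    qed
  qed (simp_all add: T_def R_sr_def R_rd_def)
  finally show ?thesis .
qed

end
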